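(* Let $\sigma$ and $\rho$ be two Grothendieck topologies on a category $\mathcal{C}$. Suppose that for every $\rho$-covering $\{U_i\to X\}_{i\in I}$ and every choice of $\sigma$-coverings $\{V_{ij}\to U_i\}_{j\in J_i}$ ($i\in I$), there exist a $\sigma$-covering $\{U_k'\to X\}_{k\in K}$ and $\rho$-coverings $\{V_{k\ell}'\to U_k'\}_{\ell\in L_k}$ ($k\in K$) such that $\{V_{k\ell}'\to X\}_{k\in K,\ell\in L_k}$ refines $\{V_{ij}\to X\}_{i\in I, j\in J_i}$. If $F$ is a presheaf (of abelian groups) on $\mathcal{C}$ which is $\rho$-separated, then its associated $\sigma$-sheaf $a_\sigma F$ is also $\rho$-separated.
   Context: A presheaf $F$ is $\rho$-separated if for every $\rho$-covering $\{U_i\to X\}$ the map $F(X)\to\prod_i F(U_i)$ is injective. $a_\sigma$ denotes sheafification for $\sigma$. A refinement of a family $\{U_i\to X\}$ is a family $\{V_j\to X\}$ each member of which factors through some $U_{i}\to X$. *)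

theory Defs
  imports "HOL-Algebra.Group"
begin

record ('o,'m) cat =
  cobj  :: "'o set"
  carr  :: "'m set"
  cdom  :: "'m \<Rightarrow> 'o"
  ccod  :: "'m \<Rightarrow> 'o"
  ccomp :: "'m \<Rightarrow> 'm \<Rightarrow> 'm"   (* ccomp C g f = g o f, for ccod f = cdom g *)
  cid   :: "'o \<Rightarrow> 'm"

definition harr :: "('o,'m) cat \<Rightarrow> 'm \<Rightarrow> 'o \<Rightarrow> 'o \<Rightarrow> bool" where
  "harr C f X Y \<longleftrightarrow> f \<in> carr C \<and> cdom C f = X \<and> ccod C f = Y"

definition category :: "('o,'m) cat \<Rightarrow> bool" where
  "category C \<longleftrightarrow>
     (\<forall>f\<in>carr C. cdom C f \<in> cobj C \<and> ccod C f \<in> cobj C) \<and>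
     (\<forall>X\<in>cobj C. harr C (cid C X) X X) \<and>
     (\<forall>f\<in>carr C. \<forall>g\<in>carr C. ccod C f = cdom C g \<longrightarrow>
         harr C (ccomp C g f) (cdom C f) (ccod C g)) \<and>
     (\<forall>f\<in>carr C. ccomp C (cid C (ccod C f)) f = f \<and> ccomp C f (cid C (cdom C f)) = f) \<and>
     (\<forall>f\<in>carr C. \<forall>g\<in>carr C. \<forall>h\<in>carr C. ccod C f = cdom C g \<and> ccod C g = cdom C h \<longrightarrow>
         ccomp C h (ccomp C g f) = ccomp C (ccomp C h g) f)"

definition iso :: "('o,'m) cat \<Rightarrow> 'm \<Rightarrow> bool" where
  "iso C f \<longleftrightarrow> f \<in> carr C \<and> (\<exists>g. harr C g (ccod C f) (cdom C f) \<and>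
      ccomp C g f = cid C (cdom C f) \<and> ccomp C f g = cid C (ccod C f))"

definition is_pullback :: "('o,'m) cat \<Rightarrow> 'm \<Rightarrow> 'm \<Rightarrow> 'm \<Rightarrow> 'm \<Rightarrow> bool" where
  "is_pullback C f g p q \<longleftrightarrow>
     f \<in> carr C \<and> g \<in> carr C \<and> ccod C f = ccod C g \<and>
     harr C p (cdom C p) (cdom C f) \<and> harr C q (cdom C p) (cdom C g) \<and>
     ccomp C f p = ccomp C g q \<and>
     (\<forall>a b. a \<in> carr C \<and> b \<in> carr C \<and> cdom C a = cdom C b \<and>
            ccod C a = cdom C f \<and> ccod C b = cdom C g \<and> ccomp C f a = ccomp C g b \<longrightarrow>
        (\<exists>!h. harr C h (cdom C a) (cdom C p) \<and> ccomp C p h = a \<and> ccomp C q h = b))"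

section \<open>Grothendieck topologies (families of coverings, in the sense of Artin)\<close>

text \<open>A family of morphisms into X is represented by the set of its members.
  T X is the set of coverings of X.\<close>

definition comp_fam :: "('o,'m) cat \<Rightarrow> 'm set \<Rightarrow> ('m \<Rightarrow> 'm set) \<Rightarrow> 'm set" where
  "comp_fam C U V = (\<Union>u\<in>U. ccomp C u ` V u)"

definition gtop :: "('o,'m) cat \<Rightarrow> ('o \<Rightarrow> 'm set set) \<Rightarrow> bool" where
  "gtop C T \<longleftrightarrow>
     (\<forall>X. X \<notin> cobj C \<longrightarrow> T X = {}) \<and>
     (\<forall>X. \<forall>U\<in>T X. \<forall>u\<in>U. u \<in> carr C \<and> ccod C u = X) \<and>
     (\<forall>f. iso C f \<longrightarrow> {f} \<in> T (ccod C f)) \<and>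
     (\<forall>X. \<forall>U\<in>T X. \<forall>V. (\<forall>u\<in>U. V u \<in> T (cdom C u)) \<longrightarrow> comp_fam C U V \<in> T X) \<and>
     (\<forall>X. \<forall>U\<in>T X. \<forall>g. g \<in> carr C \<and> ccod C g = X \<longrightarrow>
        (\<forall>u\<in>U. \<exists>p q. is_pullback C u g p q) \<and>
        (\<forall>pb :: 'm \<Rightarrow> 'm \<times> 'm. (\<forall>u\<in>U. is_pullback C u g (fst (pb u)) (snd (pb u))) \<longrightarrow>
            (\<lambda>u. snd (pb u)) ` U \<in> T (cdom C g)))"

definition refines :: "('o,'m) cat \<Rightarrow> 'm set \<Rightarrow> 'm set \<Rightarrow> bool" where
  "refines C W U \<longleftrightarrow> (\<forall>w\<in>W. \<exists>u\<in>U. \<exists>h. h \<in> carr C \<and> ccod C h = cdom C u \<and> w = ccomp C u h)"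

text \<open>sec F X = F(X); res F f : F(ccod f) -> F(cdom f) is restriction along f.\<close>
record ('o,'m,'v) presheaf =
  sec :: "'o \<Rightarrow> 'v set"
  res :: "'m \<Rightarrow> 'v \<Rightarrow> 'v"

definition is_presheaf :: "('o,'m) cat \<Rightarrow> ('o,'m,'v) presheaf \<Rightarrow> bool" where
  "is_presheaf C F \<longleftrightarrow>
     (\<forall>f\<in>carr C. res F f ` sec F (ccod C f) \<subseteq> sec F (cdom C f)) \<and>
     (\<forall>X\<in>cobj C. \<forall>x\<in>sec F X. res F (cid C X) x = x) \<and>
     (\<forall>f\<in>carr C. \<forall>g\<in>carr C. ccod C f = cdom C g \<longrightarrow>
        (\<forall>x\<in>sec F (ccod C g). res F (ccomp C g f) x = res F f (res F g x)))"

definition is_ab_presheaf :: "('o,'m) cat \<Rightarrow> ('o,'m,'v) presheaf \<Rightarrow> ('o \<Rightarrow> 'v monoid) \<Rightarrow> bool" where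
  "is_ab_presheaf C F G \<longleftrightarrow> is_presheaf C F \<and>
     (\<forall>X\<in>cobj C. comm_group (G X) \<and> carrier (G X) = sec F X) \<and>
     (\<forall>f\<in>carr C. res F f \<in> Group.hom (G (ccod C f)) (G (cdom C f)))"

definition separated :: "('o,'m) cat \<Rightarrow> ('o \<Rightarrow> 'm set set) \<Rightarrow> ('o,'m,'v) presheaf \<Rightarrow> bool" where
  "separated C T F \<longleftrightarrow>
     (\<forall>X. \<forall>U\<in>T X. inj_on (\<lambda>x. \<lambda>u\<in>U. res F u x) (sec F X))"

definition compat :: "('o,'m) cat \<Rightarrow> ('o,'m,'v) presheaf \<Rightarrow> 'm set \<Rightarrow> ('m \<Rightarrow> 'v) \<Rightarrow> bool" where
  "compat C F U s \<longleftrightarrow> s \<in> extensional U \<and>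
     (\<forall>u\<in>U. s u \<in> sec F (cdom C u)) \<and>
     (\<forall>u1\<in>U. \<forall>u2\<in>U. \<forall>a b. a \<in> carr C \<and> b \<in> carr C \<and> cdom C a = cdom C b \<and>
         ccod C a = cdom C u1 \<and> ccod C b = cdom C u2 \<and> ccomp C u1 a = ccomp C u2 b \<longrightarrow>
         res F a (s u1) = res F b (s u2))"

definition plus_rel :: "('o,'m) cat \<Rightarrow> ('o \<Rightarrow> 'm set set) \<Rightarrow> ('o,'m,'v) presheaf \<Rightarrow> 'o
    \<Rightarrow> ('m set \<times> ('m \<Rightarrow> 'v)) \<Rightarrow> ('m set \<times> ('m \<Rightarrow> 'v)) \<Rightarrow> bool" where
  "plus_rel C T F X P Q \<longleftrightarrow>
     (\<exists>W\<in>T X. \<forall>w\<in>W. \<exists>u\<in>fst P. \<exists>v\<in>fst Q. \<exists>a b.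
        a \<in> carr C \<and> b \<in> carr C \<and> ccod C a = cdom C u \<and> ccod C b = cdom C v \<and>
        ccomp C u a = w \<and> ccomp C v b = w \<and> res F a (snd P u) = res F b (snd Q v))"

definition plus_reps :: "('o,'m) cat \<Rightarrow> ('o \<Rightarrow> 'm set set) \<Rightarrow> ('o,'m,'v) presheaf \<Rightarrow> 'o
    \<Rightarrow> ('m set \<times> ('m \<Rightarrow> 'v)) set" where
  "plus_reps C T F X = {(U, s). U \<in> T X \<and> compat C F U s}"

definition plus_class :: "('o,'m) cat \<Rightarrow> ('o \<Rightarrow> 'm set set) \<Rightarrow> ('o,'m,'v) presheaf \<Rightarrow> 'o
    \<Rightarrow> ('m set \<times> ('m \<Rightarrow> 'v)) \<Rightarrow> ('m set \<times> ('m \<Rightarrow> 'v)) set" where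
  "plus_class C T F X P = {Q \<in> plus_reps C T F X. plus_rel C T F X P Q}"

definition pull_rep :: "('o,'m) cat \<Rightarrow> ('o,'m,'v) presheaf \<Rightarrow> 'm
    \<Rightarrow> ('m set \<times> ('m \<Rightarrow> 'v)) \<Rightarrow> ('m set \<times> ('m \<Rightarrow> 'v))" where
  "pull_rep C F f P =
     (let pb = (SOME pb :: 'm \<Rightarrow> 'm \<times> 'm. \<forall>u\<in>fst P. is_pullback C u f (fst (pb u)) (snd (pb u)));
          W = (\<lambda>u. snd (pb u)) ` fst P
      in (W, \<lambda>w\<in>W. (let u = (SOME u. u \<in> fst P \<and> snd (pb u) = w) in res F (fst (pb u)) (snd P u))))"

definition plus :: "('o,'m) cat \<Rightarrow> ('o \<Rightarrow> 'm set set) \<Rightarrow> ('o,'m,'v) presheaf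
    \<Rightarrow> ('o,'m,('m set \<times> ('m \<Rightarrow> 'v)) set) presheaf" where
  "plus C T F =
     \<lparr> sec = (\<lambda>X. plus_class C T F X ` plus_reps C T F X),
       res = (\<lambda>f c. if c \<in> plus_class C T F (ccod C f) ` plus_reps C T F (ccod C f)
                    then plus_class C T F (cdom C f) (pull_rep C F f (SOME P. P \<in> c))
                    else undefined) \<rparr>"

text \<open>The associated sheaf a_T F = F^{++} (underlying presheaf of sets).\<close>
definition sheafify :: "('o,'m) cat \<Rightarrow> ('o \<Rightarrow> 'm set set) \<Rightarrow> ('o,'m,'v) presheaf
    \<Rightarrow> ('o,'m,('m set \<times> ('m \<Rightarrow> ('m set \<times> ('m \<Rightarrow> 'v)) set)) set) presheaf" where
  "sheafify C T F = plus C T (plus C T F)"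

end

theory Submission
  imports Defs
begin

(* Write F+ for the plus construction with respect to sigma, so that the sigma-sheafification is
   F++.  Every section of F++ comes sigma-locally from F.  If the
      images of two sections x, y of F agree on a rho-covering, then x, y agree sigma-locally on a
      rho-covering followed by sigma-coverings; the refinement hypothesis turns this into a
      sigma-covering followed by rho-coverings, and rho-separatedness of F gives sigma-local
      equality of x and y.  Hence two sections of F++ agreeing on a rho-covering are sigma-locally
      equal, so equal because F++ is sigma-separated. *)

locale category_ctx =
  fixes C :: "('o,'m) cat"
  assumes cat: "category C"
begin

lemma dom_obj: "f \<in> carr C \<Longrightarrow> cdom C f \<in> cobj C"
  and cod_obj: "f \<in> carr C \<Longrightarrow> ccod C f \<in> cobj C"
  using cat unfolding category_def by blast+

lemma id_arr [simp]: "X \<in> cobj C \<Longrightarrow> cid C X \<in> carr C"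
  and id_dom [simp]: "X \<in> cobj C \<Longrightarrow> cdom C (cid C X) = X"
  and id_cod [simp]: "X \<in> cobj C \<Longrightarrow> ccod C (cid C X) = X"
  using cat unfolding category_def harr_def by blast+

lemma comp_arr [simp]: "f \<in> carr C \<Longrightarrow> g \<in> carr C \<Longrightarrow> ccod C f = cdom C g \<Longrightarrow> ccomp C g f \<in> carr C"
  and comp_dom [simp]: "f \<in> carr C \<Longrightarrow> g \<in> carr C \<Longrightarrow> ccod C f = cdom C g \<Longrightarrow> cdom C (ccomp C g f) = cdom C f"
  and comp_cod [simp]: "f \<in> carr C \<Longrightarrow> g \<in> carr C \<Longrightarrow> ccod C f = cdom C g \<Longrightarrow> ccod C (ccomp C g f) = ccod C g"
  using cat unfolding category_def harr_def by blast+

lemma id_left [simp]: "f \<in> carr C \<Longrightarrow> ccod C f = X \<Longrightarrow> ccomp C (cid C X) f = f"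
  and id_right [simp]: "f \<in> carr C \<Longrightarrow> cdom C f = X \<Longrightarrow> ccomp C f (cid C X) = f"
  using cat unfolding category_def by blast+

lemma assoc:
  "f \<in> carr C \<Longrightarrow> g \<in> carr C \<Longrightarrow> h \<in> carr C \<Longrightarrow> ccod C f = cdom C g \<Longrightarrow> ccod C g = cdom C h
   \<Longrightarrow> ccomp C h (ccomp C g f) = ccomp C (ccomp C h g) f"
  using cat unfolding category_def by blast

end

lemma res_sec:
  "is_presheaf C H \<Longrightarrow> f \<in> carr C \<Longrightarrow> x \<in> sec H (ccod C f) \<Longrightarrow> res H f x \<in> sec H (cdom C f)"
  unfolding is_presheaf_def by blast

lemma res_id: "is_presheaf C H \<Longrightarrow> X \<in> cobj C \<Longrightarrow> x \<in> sec H X \<Longrightarrow> res H (cid C X) x = x"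
  unfolding is_presheaf_def by blast

lemma res_comp:
  "is_presheaf C H \<Longrightarrow> f \<in> carr C \<Longrightarrow> g \<in> carr C \<Longrightarrow> ccod C f = cdom C g \<Longrightarrow> x \<in> sec H (ccod C g)
   \<Longrightarrow> res H (ccomp C g f) x = res H f (res H g x)"
  unfolding is_presheaf_def by blast

definition agree_on :: "('o,'m,'v) presheaf \<Rightarrow> 'm set \<Rightarrow> 'v \<Rightarrow> 'v \<Rightarrow> bool" where
  "agree_on H U x y \<longleftrightarrow> (\<forall>u\<in>U. res H u x = res H u y)"

lemma separated_agree_on:
  assumes "separated C T H" and "U \<in> T X" and "x \<in> sec H X" and "y \<in> sec H X"
    and "agree_on H U x y"
  shows "x = y"
proof -
  have "(\<lambda>u\<in>U. res H u x) = (\<lambda>u\<in>U. res H u y)"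
    using assms(5) unfolding agree_on_def by (intro restrict_ext) blast
  then show ?thesis using assms(1-4) unfolding separated_def by (blast dest: inj_onD)
qed

lemma separatedI:
  assumes "\<And>X U x y. U \<in> T X \<Longrightarrow> x \<in> sec H X \<Longrightarrow> y \<in> sec H X \<Longrightarrow> agree_on H U x y \<Longrightarrow> x = y"
  shows "separated C T H"
  unfolding separated_def
proof (intro allI ballI inj_onI)
  fix X U x y assume U: "U \<in> T X" and x: "x \<in> sec H X" and y: "y \<in> sec H X"
    and eq: "(\<lambda>u\<in>U. res H u x) = (\<lambda>u\<in>U. res H u y)"
  have "agree_on H U x y"
    unfolding agree_on_def using eq by (metis restrict_apply')
  then show "x = y" by (rule assms[OF U x y])
qed

context category_ctx
begin

lemma agree_on_refines:
  assumes H: "is_presheaf C H" and x: "x \<in> sec H X" and y: "y \<in> sec H X"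
    and U: "\<forall>u\<in>U. u \<in> carr C \<and> ccod C u = X"
    and W: "refines C W U" and agr: "agree_on H U x y"
  shows "agree_on H W x y"
  unfolding agree_on_def
proof
  fix w assume "w \<in> W"
  then obtain u h where u: "u \<in> U" and h: "h \<in> carr C" "ccod C h = cdom C u"
    and w: "w = ccomp C u h"
    using W unfolding refines_def by blast
  have "\<And>z. z \<in> sec H X \<Longrightarrow> res H w z = res H h (res H u z)"
    using res_comp[OF H h(1) _ h(2)] u U w by auto
  then show "res H w x = res H w y" using x y agr u unfolding agree_on_def by simp
qed

lemma comp_fam_members:
  assumes U: "\<forall>u\<in>U. u \<in> carr C \<and> ccod C u = X"
    and V: "\<forall>u\<in>U. \<forall>v\<in>V u. v \<in> carr C \<and> ccod C v = cdom C u"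
  shows "\<forall>w\<in>comp_fam C U V. w \<in> carr C \<and> ccod C w = X"
  using U V unfolding comp_fam_def by auto

lemma agree_on_comp_fam:
  assumes H: "is_presheaf C H" and x: "x \<in> sec H X" and y: "y \<in> sec H X"
    and U: "\<forall>u\<in>U. u \<in> carr C \<and> ccod C u = X"
    and V: "\<forall>u\<in>U. \<forall>v\<in>V u. v \<in> carr C \<and> ccod C v = cdom C u"
  shows "agree_on H (comp_fam C U V) x y \<longleftrightarrow> (\<forall>u\<in>U. agree_on H (V u) (res H u x) (res H u y))"
proof -
  have "\<And>u v z. u \<in> U \<Longrightarrow> v \<in> V u \<Longrightarrow> z \<in> sec H X \<Longrightarrow> res H (ccomp C u v) z = res H v (res H u z)"
    using res_comp[OF H] U V by force
  then show ?thesis using x y unfolding agree_on_def comp_fam_def by auto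
qed

end

lemma pullback_facts:
  assumes "is_pullback C u g p q"
  shows "p \<in> carr C" "q \<in> carr C" "ccod C p = cdom C u" "ccod C q = cdom C g"
    "cdom C q = cdom C p" "ccomp C u p = ccomp C g q" "u \<in> carr C" "g \<in> carr C" "ccod C u = ccod C g"
  using assms unfolding is_pullback_def harr_def by auto

locale site = category_ctx C for C :: "('o,'m) cat" +
  fixes T :: "'o \<Rightarrow> 'm set set"
  assumes top: "gtop C T"
begin

lemmas topology_axioms =
  top[unfolded gtop_def, THEN conjunct1]
  top[unfolded gtop_def, THEN conjunct2, THEN conjunct1]
  top[unfolded gtop_def, THEN conjunct2, THEN conjunct2, THEN conjunct1]
  top[unfolded gtop_def, THEN conjunct2, THEN conjunct2, THEN conjunct2, THEN conjunct1]
  top[unfolded gtop_def, THEN conjunct2, THEN conjunct2, THEN conjunct2, THEN conjunct2]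

lemma cov_obj: "U \<in> T X \<Longrightarrow> X \<in> cobj C"
  using topology_axioms(1) by blast

lemma cov_members: "U \<in> T X \<Longrightarrow> \<forall>u\<in>U. u \<in> carr C \<and> ccod C u = X"
  using topology_axioms(2) by blast

lemma cov_arr: "U \<in> T X \<Longrightarrow> u \<in> U \<Longrightarrow> u \<in> carr C"
  and cov_cod: "U \<in> T X \<Longrightarrow> u \<in> U \<Longrightarrow> ccod C u = X"
  using cov_members by blast+

lemma cov_comp: "U \<in> T X \<Longrightarrow> (\<And>u. u \<in> U \<Longrightarrow> V u \<in> T (cdom C u)) \<Longrightarrow> comp_fam C U V \<in> T X"
  using topology_axioms(4) by blast

lemma cov_id:
  assumes X: "X \<in> cobj C"
  shows "{cid C X} \<in> T X"
proof -
  have "iso C (cid C X)"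
    unfolding iso_def harr_def using X by (intro conjI exI[of _ "cid C X"]) simp_all
  then show ?thesis using topology_axioms(3) X by force
qed

lemma cov_pull_chosen:
  assumes "U \<in> T X" "g \<in> carr C" "ccod C g = X"
    and "\<forall>u\<in>U. is_pullback C u g (fst (pb u)) (snd (pb u))"
  shows "(\<lambda>u. snd (pb u)) ` U \<in> T (cdom C g)"
  using topology_axioms(5) assms by blast

lemma cov_pull:
  assumes U: "U \<in> T X" and g: "g \<in> carr C" "ccod C g = X"
  obtains pb where "\<forall>u\<in>U. is_pullback C u g (fst (pb u)) (snd (pb u))"
    and "(\<lambda>u. snd (pb u)) ` U \<in> T (cdom C g)"
proof -
  have "\<forall>u\<in>U. \<exists>p q. is_pullback C u g p q" using topology_axioms(5) U g by blast
  then have "\<forall>u\<in>U. \<exists>pq. is_pullback C u g (fst pq) (snd pq)" by auto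
  then obtain pb where "\<forall>u\<in>U. is_pullback C u g (fst (pb u)) (snd (pb u))" by metis
  then show ?thesis using that cov_pull_chosen[OF U g] by blast
qed

lemma common_refinement:
  assumes A: "A \<in> T X" and B: "B \<in> T X"
  shows "\<exists>W\<in>T X. refines C W A \<and> refines C W B"
proof -
  have "\<forall>a\<in>A. \<exists>pb. (\<forall>b\<in>B. is_pullback C b a (fst (pb b)) (snd (pb b))) \<and>
                   (\<lambda>b. snd (pb b)) ` B \<in> T (cdom C a)"
    using cov_pull[OF B] cov_members[OF A] by metis
  then obtain pb where pb: "\<And>a b. a \<in> A \<Longrightarrow> b \<in> B \<Longrightarrow> is_pullback C b a (fst (pb a b)) (snd (pb a b))"
    and cov: "\<And>a. a \<in> A \<Longrightarrow> (\<lambda>b. snd (pb a b)) ` B \<in> T (cdom C a)"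
    by metis
  let ?W = "comp_fam C A (\<lambda>a. (\<lambda>b. snd (pb a b)) ` B)"
  have "refines C ?W A \<and> refines C ?W B"
    unfolding refines_def comp_fam_def
  proof (intro conjI ballI)
    fix w assume "w \<in> (\<Union>a\<in>A. ccomp C a ` (\<lambda>b. snd (pb a b)) ` B)"
    then obtain a b where a: "a \<in> A" and b: "b \<in> B" and w: "w = ccomp C a (snd (pb a b))" by blast
    note pf = pullback_facts[OF pb[OF a b]]
    show "\<exists>u\<in>A. \<exists>h. h \<in> carr C \<and> ccod C h = cdom C u \<and> w = ccomp C u h"
      using a w pf by blast
    show "\<exists>u\<in>B. \<exists>h. h \<in> carr C \<and> ccod C h = cdom C u \<and> w = ccomp C u h"
      using b w pf by metis
  qed
  then show ?thesis using cov_comp[OF A cov] by blast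
qed

definition loc_eq :: "('o,'m,'v) presheaf \<Rightarrow> 'o \<Rightarrow> 'v \<Rightarrow> 'v \<Rightarrow> bool" where
  "loc_eq H X x y \<longleftrightarrow> (\<exists>U\<in>T X. agree_on H U x y)"

lemma loc_eq_local:
  assumes H: "is_presheaf C H" and Z: "Z \<in> T Y" and x: "x \<in> sec H Y" and y: "y \<in> sec H Y"
    and loc: "\<And>z. z \<in> Z \<Longrightarrow> loc_eq H (cdom C z) (res H z x) (res H z y)"
  shows "loc_eq H Y x y"
proof -
  obtain V where V: "\<And>z. z \<in> Z \<Longrightarrow> V z \<in> T (cdom C z)"
    and agr: "\<And>z. z \<in> Z \<Longrightarrow> agree_on H (V z) (res H z x) (res H z y)"
    using loc unfolding loc_eq_def by metis
  have "agree_on H (comp_fam C Z V) x y"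
    using agree_on_comp_fam[OF H x y cov_members[OF Z]] cov_members[OF V] agr by blast
  then show ?thesis unfolding loc_eq_def using cov_comp[OF Z V] by blast
qed

lemma loc_eq_restrict:
  assumes H: "is_presheaf C H" and x: "x \<in> sec H X" and y: "y \<in> sec H X"
    and g: "g \<in> carr C" "ccod C g = X" and le: "loc_eq H X x y"
  shows "loc_eq H (cdom C g) (res H g x) (res H g y)"
proof -
  obtain U where U: "U \<in> T X" and agr: "agree_on H U x y"
    using le unfolding loc_eq_def by blast
  obtain pb where pb: "\<forall>u\<in>U. is_pullback C u g (fst (pb u)) (snd (pb u))"
    and V: "(\<lambda>u. snd (pb u)) ` U \<in> T (cdom C g)"
    using cov_pull[OF U g] by blast
  have "agree_on H ((\<lambda>u. snd (pb u)) ` U) (res H g x) (res H g y)"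
    unfolding agree_on_def
  proof
    fix v assume "v \<in> (\<lambda>u. snd (pb u)) ` U"
    then obtain u where u: "u \<in> U" and v: "v = snd (pb u)" by blast
    note pf = pullback_facts[OF pb[rule_format, OF u]]
    have "\<And>z. z \<in> sec H X \<Longrightarrow> res H v (res H g z) = res H (fst (pb u)) (res H u z)"
      using res_comp[OF H pf(2) g(1)] res_comp[OF H pf(1) cov_arr[OF U u]] pf v g
        cov_cod[OF U u] by metis
    then show "res H v (res H g x) = res H v (res H g y)"
      using x y agr u unfolding agree_on_def by simp
  qed
  then show ?thesis unfolding loc_eq_def using V by blast
qed

text \<open>A representative P of a section of the plus construction is a covering fst P together with a
  compatible family snd P.  rep_match H f P g Q says that the restriction of P along f and the
  restriction of Q along g agree, witnessed by single members p of P and q of Q through which f and g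
  factor.  rep_loc_match says this holds locally on a covering of the common domain Y of f and g;
  the equivalence relation of the plus construction is the case f = g = identity.\<close>
definition rep_match :: "('o,'m,'v) presheaf \<Rightarrow> 'm \<Rightarrow> 'm set \<times> ('m \<Rightarrow> 'v) \<Rightarrow> 'm \<Rightarrow> 'm set \<times> ('m \<Rightarrow> 'v) \<Rightarrow> bool"
  where
  "rep_match H f P g Q \<longleftrightarrow> (\<exists>p\<in>fst P. \<exists>q\<in>fst Q. \<exists>a b. a \<in> carr C \<and> b \<in> carr C \<and>
      ccod C a = cdom C p \<and> ccod C b = cdom C q \<and> ccomp C p a = f \<and> ccomp C q b = g \<and>
      res H a (snd P p) = res H b (snd Q q))"

definition rep_loc_match ::
    "('o,'m,'v) presheaf \<Rightarrow> 'o \<Rightarrow> 'm \<Rightarrow> 'm set \<times> ('m \<Rightarrow> 'v) \<Rightarrow> 'm \<Rightarrow> 'm set \<times> ('m \<Rightarrow> 'v) \<Rightarrow> bool"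
  where
  "rep_loc_match H Y f P g Q \<longleftrightarrow> (\<exists>Z\<in>T Y. \<forall>z\<in>Z. rep_match H (ccomp C f z) P (ccomp C g z) Q)"

definition good_rep :: "('o,'m,'v) presheaf \<Rightarrow> 'm set \<times> ('m \<Rightarrow> 'v) \<Rightarrow> bool" where
  "good_rep H P \<longleftrightarrow> (\<forall>p\<in>fst P. p \<in> carr C) \<and> compat C H (fst P) (snd P)"

lemma rep_match_sym: "rep_match H f P g Q \<Longrightarrow> rep_match H g Q f P"
  unfolding rep_match_def by metis
lemma rep_loc_match_sym: "rep_loc_match H Y f P g Q \<Longrightarrow> rep_loc_match H Y g Q f P"
  unfolding rep_loc_match_def using rep_match_sym by metis

lemma good_rep_sec: "good_rep H P \<Longrightarrow> p \<in> fst P \<Longrightarrow> snd P p \<in> sec H (cdom C p)"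
  unfolding good_rep_def compat_def by blast

lemma rep_match_restrict:
  assumes H: "is_presheaf C H" and gP: "good_rep H P" and gQ: "good_rep H Q" and d: "rep_match H f P g Q"
    and m: "m \<in> carr C" "ccod C m = cdom C f" and fg: "cdom C g = cdom C f"
  shows "rep_match H (ccomp C f m) P (ccomp C g m) Q"
proof -
  obtain p q a b where pq: "p \<in> fst P" "q \<in> fst Q" "a \<in> carr C" "b \<in> carr C"
    "ccod C a = cdom C p" "ccod C b = cdom C q" "ccomp C p a = f" "ccomp C q b = g"
    "res H a (snd P p) = res H b (snd Q q)"
    using d unfolding rep_match_def by blast
  have p: "p \<in> carr C" and q: "q \<in> carr C" using gP gQ pq unfolding good_rep_def by auto
  have da: "cdom C a = cdom C f" using pq p by (metis comp_dom)
  have db: "cdom C b = cdom C f" using pq q fg by (metis comp_dom)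
  have fm: "ccomp C p (ccomp C a m) = ccomp C f m" using assoc[of m a p] pq p m da by simp
  have gm: "ccomp C q (ccomp C b m) = ccomp C g m" using assoc[of m b q] pq q m db by simp
  have sec_eq: "res H (ccomp C a m) (snd P p) = res H (ccomp C b m) (snd Q q)"
    using res_comp[OF H, of m a "snd P p"] res_comp[OF H, of m b "snd Q q"] pq m da db
      good_rep_sec[OF gP pq(1)] good_rep_sec[OF gQ pq(2)] by simp
  show ?thesis unfolding rep_match_def
    by (intro bexI[OF _ pq(1)] bexI[OF _ pq(2)] exI[of _ "ccomp C a m"] exI[of _ "ccomp C b m"])
      (use fm gm sec_eq pq m da db p q in simp)
qed

text \<open>Matches compose through a common middle representative, by compatibility of Q.\<close>
lemma rep_match_trans:
  assumes gQ: "good_rep H Q" and d1: "rep_match H f P g Q" and d2: "rep_match H g Q h S"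
  shows "rep_match H f P h S"
proof -
  obtain p q1 a1 b1 where A: "p \<in> fst P" "q1 \<in> fst Q" "a1 \<in> carr C" "b1 \<in> carr C"
    "ccod C a1 = cdom C p" "ccod C b1 = cdom C q1" "ccomp C p a1 = f" "ccomp C q1 b1 = g"
    "res H a1 (snd P p) = res H b1 (snd Q q1)"
    using d1 unfolding rep_match_def by blast
  obtain q2 s a2 b2 where B: "q2 \<in> fst Q" "s \<in> fst S" "a2 \<in> carr C" "b2 \<in> carr C"
    "ccod C a2 = cdom C q2" "ccod C b2 = cdom C s" "ccomp C q2 a2 = g" "ccomp C s b2 = h"
    "res H a2 (snd Q q2) = res H b2 (snd S s)"
    using d2 unfolding rep_match_def by blast
  have q: "q1 \<in> carr C" "q2 \<in> carr C" using gQ A B unfolding good_rep_def by auto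
  have "cdom C b1 = cdom C a2" using A B q by (metis comp_dom)
  then have "res H b1 (snd Q q1) = res H a2 (snd Q q2)"
    using gQ A B unfolding good_rep_def compat_def by metis
  then show ?thesis unfolding rep_match_def using A B by metis
qed

text \<open>Local matches are stable under restriction (pull the witnessing covering back along m).\<close>
lemma rep_loc_match_restrict:
  assumes H: "is_presheaf C H" and gP: "good_rep H P" and gQ: "good_rep H Q" and r: "rep_loc_match H Y f P g Q"
    and fg: "f \<in> carr C" "g \<in> carr C" "cdom C f = Y" "cdom C g = Y"
    and m: "m \<in> carr C" "ccod C m = Y"
  shows "rep_loc_match H (cdom C m) (ccomp C f m) P (ccomp C g m) Q"
proof -
  obtain Z where Z: "Z \<in> T Y" and dz: "\<And>z. z \<in> Z \<Longrightarrow> rep_match H (ccomp C f z) P (ccomp C g z) Q"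
    using r unfolding rep_loc_match_def by blast
  obtain pb where pb: "\<forall>z\<in>Z. is_pullback C z m (fst (pb z)) (snd (pb z))"
    and Z': "(\<lambda>z. snd (pb z)) ` Z \<in> T (cdom C m)"
    using cov_pull[OF Z m] by blast
  show ?thesis unfolding rep_loc_match_def
  proof (rule bexI[OF _ Z'], clarsimp)
    fix z assume z: "z \<in> Z"
    let ?p = "fst (pb z)" and ?q = "snd (pb z)"
    have P: "is_pullback C z m ?p ?q" using pb z by blast
    note pf = pullback_facts[OF P]
    have zc: "z \<in> carr C" "ccod C z = Y" using cov_arr[OF Z z] cov_cod[OF Z z] by auto
    have "rep_match H (ccomp C (ccomp C f z) ?p) P (ccomp C (ccomp C g z) ?p) Q"
      by (rule rep_match_restrict[OF H gP gQ dz[OF z]]) (use pf zc fg in auto)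
    moreover have "ccomp C (ccomp C f z) ?p = ccomp C (ccomp C f m) ?q"
      using assoc[of ?p z f] assoc[of ?q m f] pf zc fg m by simp
    moreover have "ccomp C (ccomp C g z) ?p = ccomp C (ccomp C g m) ?q"
      using assoc[of ?p z g] assoc[of ?q m g] pf zc fg m by simp
    ultimately show "rep_match H (ccomp C (ccomp C f m) ?q) P (ccomp C (ccomp C g m) ?q) Q" by simp
  qed
qed

text \<open>Being a local match is itself a local property (compose the coverings).\<close>
lemma rep_loc_match_local:
  assumes Z: "Z \<in> T Y" and fg: "f \<in> carr C" "g \<in> carr C" "cdom C f = Y" "cdom C g = Y"
    and loc: "\<And>z. z \<in> Z \<Longrightarrow> rep_loc_match H (cdom C z) (ccomp C f z) P (ccomp C g z) Q"
  shows "rep_loc_match H Y f P g Q"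
proof -
  have "\<forall>z\<in>Z. \<exists>W\<in>T (cdom C z). \<forall>w\<in>W. rep_match H (ccomp C (ccomp C f z) w) P (ccomp C (ccomp C g z) w) Q"
    using loc unfolding rep_loc_match_def by blast
  then obtain V where V: "\<And>z. z \<in> Z \<Longrightarrow> V z \<in> T (cdom C z)"
    and dv: "\<And>z w. z \<in> Z \<Longrightarrow> w \<in> V z \<Longrightarrow> rep_match H (ccomp C (ccomp C f z) w) P (ccomp C (ccomp C g z) w) Q"
    by metis
  show ?thesis unfolding rep_loc_match_def
  proof (rule bexI[OF _ cov_comp[OF Z V]])
    show "\<forall>e\<in>comp_fam C Z V. rep_match H (ccomp C f e) P (ccomp C g e) Q"
    proof
      fix e assume "e \<in> comp_fam C Z V"
      then obtain z w where zw: "z \<in> Z" "w \<in> V z" "e = ccomp C z w" unfolding comp_fam_def by blast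
      have zc: "z \<in> carr C" "ccod C z = Y" using cov_arr[OF Z zw(1)] cov_cod[OF Z zw(1)] by auto
      have wc: "w \<in> carr C" "ccod C w = cdom C z" using cov_arr[OF V zw(2)] cov_cod[OF V zw(2)] zw by auto
      show "rep_match H (ccomp C f e) P (ccomp C g e) Q"
        using dv[OF zw(1,2)] assoc[of w z f] assoc[of w z g] zc wc fg zw(3) by simp
    qed
  qed
qed

text \<open>Local matches are transitive; this makes the plus relation an equivalence.\<close>
lemma rep_loc_match_trans:
  assumes H: "is_presheaf C H" and g: "good_rep H P" "good_rep H Q" "good_rep H S"
    and fgh: "f \<in> carr C" "g \<in> carr C" "h \<in> carr C" "cdom C f = Y" "cdom C g = Y" "cdom C h = Y"
    and r1: "rep_loc_match H Y f P g Q" and r2: "rep_loc_match H Y g Q h S"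
  shows "rep_loc_match H Y f P h S"
proof -
  obtain Z where Z: "Z \<in> T Y" and dz: "\<And>z. z \<in> Z \<Longrightarrow> rep_match H (ccomp C f z) P (ccomp C g z) Q"
    using r1 unfolding rep_loc_match_def by blast
  show ?thesis
  proof (rule rep_loc_match_local[OF Z fgh(1,3,4,6)])
    fix z assume z: "z \<in> Z"
    have zc: "z \<in> carr C" "ccod C z = Y" using cov_arr[OF Z z] cov_cod[OF Z z] by auto
    have "rep_loc_match H (cdom C z) (ccomp C g z) Q (ccomp C h z) S"
      by (rule rep_loc_match_restrict[OF H g(2,3) r2 fgh(2,3,5,6) zc])
    then obtain W where W: "W \<in> T (cdom C z)"
      and dw: "\<And>w. w \<in> W \<Longrightarrow> rep_match H (ccomp C (ccomp C g z) w) Q (ccomp C (ccomp C h z) w) S"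
      unfolding rep_loc_match_def by blast
    show "rep_loc_match H (cdom C z) (ccomp C f z) P (ccomp C h z) S" unfolding rep_loc_match_def
    proof (rule bexI[OF _ W], rule ballI)
      fix w assume w: "w \<in> W"
      have wc: "w \<in> carr C" "ccod C w = cdom C z" using cov_arr[OF W w] cov_cod[OF W w] by auto
      have "rep_match H (ccomp C (ccomp C f z) w) P (ccomp C (ccomp C g z) w) Q"
        by (rule rep_match_restrict[OF H g(1,2) dz[OF z]]) (use wc zc fgh in auto)
      then show "rep_match H (ccomp C (ccomp C f z) w) P (ccomp C (ccomp C h z) w) S"
        using rep_match_trans[OF g(2) _ dw[OF w]] by blast
    qed
  qed
qed

lemma plus_reps_iff: "P \<in> plus_reps C T H X \<longleftrightarrow> fst P \<in> T X \<and> compat C H (fst P) (snd P)"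
  unfolding plus_reps_def by (cases P) auto

lemma plus_reps_good: "P \<in> plus_reps C T H X \<Longrightarrow> good_rep H P"
  unfolding plus_reps_iff good_rep_def using cov_arr by blast

lemma plus_reps_obj: "P \<in> plus_reps C T H X \<Longrightarrow> X \<in> cobj C"
  unfolding plus_reps_iff using cov_obj by blast

lemma plus_rel_iff_match: "plus_rel C T H X P Q \<longleftrightarrow> (\<exists>W\<in>T X. \<forall>w\<in>W. rep_match H w P w Q)"
  unfolding plus_rel_def rep_match_def by simp

lemma plus_rel_iff_loc_match: "plus_rel C T H X P Q \<longleftrightarrow> rep_loc_match H X (cid C X) P (cid C X) Q"
proof -
  have eq: "\<And>W w. W \<in> T X \<Longrightarrow> w \<in> W \<Longrightarrow> ccomp C (cid C X) w = w"
    using cov_arr cov_cod by simp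
  show ?thesis unfolding plus_rel_iff_match rep_loc_match_def
  proof
    assume "\<exists>W\<in>T X. \<forall>w\<in>W. rep_match H w P w Q"
    then obtain W where "W \<in> T X" "\<forall>w\<in>W. rep_match H w P w Q" by blast
    then show "\<exists>Z\<in>T X. \<forall>z\<in>Z. rep_match H (ccomp C (cid C X) z) P (ccomp C (cid C X) z) Q" using eq by auto
  next
    assume "\<exists>Z\<in>T X. \<forall>z\<in>Z. rep_match H (ccomp C (cid C X) z) P (ccomp C (cid C X) z) Q"
    then obtain W where "W \<in> T X" "\<forall>w\<in>W. rep_match H (ccomp C (cid C X) w) P (ccomp C (cid C X) w) Q" by blast
    then show "\<exists>W\<in>T X. \<forall>w\<in>W. rep_match H w P w Q" using eq by auto
  qed
qed

lemma plus_rel_refl: assumes P: "P \<in> plus_reps C T H X" shows "plus_rel C T H X P P"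
proof -
  have F: "fst P \<in> T X" using P unfolding plus_reps_iff by blast
  have "\<forall>p\<in>fst P. rep_match H p P p P"
  proof
    fix p assume p: "p \<in> fst P"
    have pc: "p \<in> carr C" using cov_arr[OF F p] .
    show "rep_match H p P p P" unfolding rep_match_def
      by (intro bexI[OF _ p] exI[of _ "cid C (cdom C p)"]) (use pc dom_obj[OF pc] in simp)
  qed
  then show ?thesis unfolding plus_rel_iff_match using F by blast
qed

lemma plus_rel_sym: assumes "plus_rel C T H X P Q" shows "plus_rel C T H X Q P"
proof -
  obtain W where W: "W \<in> T X" "\<And>w. w \<in> W \<Longrightarrow> rep_match H w P w Q" using assms unfolding plus_rel_iff_match by blast
  have "\<forall>w\<in>W. rep_match H w Q w P" using W(2) rep_match_sym by blast
  then show ?thesis unfolding plus_rel_iff_match using W(1) by blast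
qed

lemma plus_rel_trans:
  assumes H: "is_presheaf C H" and P: "P \<in> plus_reps C T H X" and Q: "Q \<in> plus_reps C T H X"
    and S: "S \<in> plus_reps C T H X"
    and r1: "plus_rel C T H X P Q" and r2: "plus_rel C T H X Q S"
  shows "plus_rel C T H X P S"
proof -
  have X: "X \<in> cobj C" using plus_reps_obj[OF P] .
  show ?thesis using r1 r2 unfolding plus_rel_iff_loc_match
    using rep_loc_match_trans[OF H plus_reps_good[OF P] plus_reps_good[OF Q] plus_reps_good[OF S], of "cid C X" "cid C X" "cid C X" X] X by simp
qed

lemma plus_class_self: "P \<in> plus_reps C T H X \<Longrightarrow> P \<in> plus_class C T H X P"
  unfolding plus_class_def using plus_rel_refl by blast

lemma plus_class_eq_iff:
  assumes H: "is_presheaf C H" and P: "P \<in> plus_reps C T H X" and Q: "Q \<in> plus_reps C T H X"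
  shows "plus_class C T H X P = plus_class C T H X Q \<longleftrightarrow> plus_rel C T H X P Q"
proof
  assume "plus_class C T H X P = plus_class C T H X Q"
  then have "Q \<in> plus_class C T H X P" using plus_class_self[OF Q] by simp
  then show "plus_rel C T H X P Q" unfolding plus_class_def by blast
next
  assume r: "plus_rel C T H X P Q"
  have "\<And>S. S \<in> plus_reps C T H X \<Longrightarrow> plus_rel C T H X P S \<longleftrightarrow> plus_rel C T H X Q S"
  proof -
    fix S assume S: "S \<in> plus_reps C T H X"
    show "plus_rel C T H X P S \<longleftrightarrow> plus_rel C T H X Q S"
    proof
      assume "plus_rel C T H X P S" then show "plus_rel C T H X Q S"
        using plus_rel_trans[OF H Q P S] plus_rel_sym[OF r] by simp
    next
      assume "plus_rel C T H X Q S" then show "plus_rel C T H X P S"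
        using plus_rel_trans[OF H P Q S] r by simp
    qed
  qed
  then show "plus_class C T H X P = plus_class C T H X Q" unfolding plus_class_def by auto
qed


lemma sec_plus: "sec (plus C T H) X = plus_class C T H X ` plus_reps C T H X"
  by (simp add: plus_def)

lemma pull_rep_shape:
  assumes U: "U \<in> T (ccod C f)" and f: "f \<in> carr C"
  obtains pb W uu t where "\<forall>u\<in>U. is_pullback C u f (fst (pb u)) (snd (pb u))"
    and "W \<in> T (cdom C f)"
    and "\<And>w. w \<in> W \<Longrightarrow> uu w \<in> U \<and> snd (pb (uu w)) = w"
    and "\<And>w. w \<in> W \<Longrightarrow> t w = res H (fst (pb (uu w))) (s (uu w))"
    and "t \<in> extensional W"
    and "pull_rep C H f (U, s) = (W, t)"
proof -
  define pb where "pb = (SOME pb :: 'm \<Rightarrow> 'm \<times> 'm. \<forall>u\<in>U. is_pullback C u f (fst (pb u)) (snd (pb u)))"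
  have ex: "\<exists>pb :: 'm \<Rightarrow> 'm \<times> 'm. \<forall>u\<in>U. is_pullback C u f (fst (pb u)) (snd (pb u))"
    using cov_pull[OF U f refl] by metis
  have pbp: "\<forall>u\<in>U. is_pullback C u f (fst (pb u)) (snd (pb u))"
    using someI_ex[OF ex] unfolding pb_def .
  define W where "W = (\<lambda>u. snd (pb u)) ` U"
  have W: "W \<in> T (cdom C f)" unfolding W_def by (rule cov_pull_chosen[OF U f refl pbp])
  define uu where "uu = (\<lambda>w. SOME u. u \<in> U \<and> snd (pb u) = w)"
  define t where "t = (\<lambda>w\<in>W. res H (fst (pb (uu w))) (s (uu w)))"
  have uu: "uu w \<in> U \<and> snd (pb (uu w)) = w" if "w \<in> W" for w
  proof -
    have "\<exists>u. u \<in> U \<and> snd (pb u) = w" using that unfolding W_def by blast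
    then show ?thesis unfolding uu_def by (rule someI_ex)
  qed
  have "pull_rep C H f (U, s) = (W, t)"
    unfolding pull_rep_def by (simp add: Let_def pb_def W_def t_def uu_def)
  moreover have "\<And>w. w \<in> W \<Longrightarrow> t w = res H (fst (pb (uu w))) (s (uu w))"
    and "t \<in> extensional W"
    unfolding t_def by simp_all
  ultimately show thesis using that[OF pbp W uu] by blast
qed

lemma pull_rep_reps:
  assumes H: "is_presheaf C H" and P: "P \<in> plus_reps C T H (ccod C f)" and f: "f \<in> carr C"
  shows "pull_rep C H f P \<in> plus_reps C T H (cdom C f)"
proof -
  obtain U s where Ps: "P = (U, s)" by (cases P)
  have U: "U \<in> T (ccod C f)" and cs: "compat C H U s" using P unfolding plus_reps_iff Ps by auto
  obtain pb W uu t where pbp: "\<forall>u\<in>U. is_pullback C u f (fst (pb u)) (snd (pb u))"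
    and W: "W \<in> T (cdom C f)" and uu: "\<And>w. w \<in> W \<Longrightarrow> uu w \<in> U \<and> snd (pb (uu w)) = w"
    and tw: "\<And>w. w \<in> W \<Longrightarrow> t w = res H (fst (pb (uu w))) (s (uu w))"
    and ext: "t \<in> extensional W" and pr: "pull_rep C H f (U, s) = (W, t)"
    by (rule pull_rep_shape[OF U f, where H = H and s = s]) (rule that)
  have ssec: "\<And>u. u \<in> U \<Longrightarrow> s u \<in> sec H (cdom C u)" using cs unfolding compat_def by blast
  have "compat C H W t"
    unfolding compat_def
  proof (intro conjI ballI allI impI)
    show "t \<in> extensional W" by (rule ext)
  next
    fix w assume w: "w \<in> W"
    note pf = pullback_facts[OF pbp[rule_format, OF conjunct1[OF uu[OF w]]]]
    show "t w \<in> sec H (cdom C w)"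
      using res_sec[OF H pf(1)] ssec uu[OF w] tw[OF w] pf by auto
  next
    fix w1 w2 a b assume w1: "w1 \<in> W" and w2: "w2 \<in> W"
      and ab: "a \<in> carr C \<and> b \<in> carr C \<and> cdom C a = cdom C b \<and> ccod C a = cdom C w1 \<and>
               ccod C b = cdom C w2 \<and> ccomp C w1 a = ccomp C w2 b"
    let ?u1 = "uu w1" and ?u2 = "uu w2"
    have u1: "?u1 \<in> U" "snd (pb ?u1) = w1" and u2: "?u2 \<in> U" "snd (pb ?u2) = w2" using uu w1 w2 by auto
    let ?p1 = "fst (pb ?u1)" and ?p2 = "fst (pb ?u2)"
    note f1 = pullback_facts[OF pbp[rule_format, OF u1(1)]]
    note f2 = pullback_facts[OF pbp[rule_format, OF u2(1)]]
    have wc: "w1 \<in> carr C" "ccod C w1 = cdom C f" "w2 \<in> carr C" "ccod C w2 = cdom C f"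
      using cov_members[OF W] w1 w2 by auto
    have e1: "res H a (t w1) = res H (ccomp C ?p1 a) (s ?u1)"
      using res_comp[OF H, of a ?p1 "s ?u1"] tw[OF w1] ab f1 u1 ssec[OF u1(1)] by simp
    have e2: "res H b (t w2) = res H (ccomp C ?p2 b) (s ?u2)"
      using res_comp[OF H, of b ?p2 "s ?u2"] tw[OF w2] ab f2 u2 ssec[OF u2(1)] by simp
    have c1: "ccomp C ?u1 (ccomp C ?p1 a) = ccomp C f (ccomp C w1 a)"
      using assoc[of a ?p1 ?u1] assoc[of a w1 f] f1 u1 ab wc f by simp
    have c2: "ccomp C ?u2 (ccomp C ?p2 b) = ccomp C f (ccomp C w2 b)"
      using assoc[of b ?p2 ?u2] assoc[of b w2 f] f2 u2 ab wc f by simp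
    have "res H (ccomp C ?p1 a) (s ?u1) = res H (ccomp C ?p2 b) (s ?u2)"
      using cs[unfolded compat_def] u1(1) u2(1) ab f1 f2 u1 u2 c1 c2 by simp
    then show "res H a (t w1) = res H b (t w2)" using e1 e2 by simp
  qed
  then show ?thesis using W pr Ps unfolding plus_reps_iff by simp
qed

lemma pull_rep_match:
  assumes H: "is_presheaf C H" and P: "P \<in> plus_reps C T H (ccod C f)" and f: "f \<in> carr C"
  shows "rep_loc_match H (cdom C f) f P (cid C (cdom C f)) (pull_rep C H f P)"
proof -
  obtain U s where Ps: "P = (U, s)" by (cases P)
  have U: "U \<in> T (ccod C f)" using P unfolding plus_reps_iff Ps by auto
  obtain pb W uu t where pbp: "\<forall>u\<in>U. is_pullback C u f (fst (pb u)) (snd (pb u))"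
    and W: "W \<in> T (cdom C f)" and uu: "\<And>w. w \<in> W \<Longrightarrow> uu w \<in> U \<and> snd (pb (uu w)) = w"
    and tw: "\<And>w. w \<in> W \<Longrightarrow> t w = res H (fst (pb (uu w))) (s (uu w))"
    and pr: "pull_rep C H f (U, s) = (W, t)"
    by (rule pull_rep_shape[OF U f, where H = H and s = s]) (rule that)
  have tsec: "\<And>w. w \<in> W \<Longrightarrow> t w \<in> sec H (cdom C w)"
    using pull_rep_reps[OF H P f] unfolding Ps pr plus_reps_iff compat_def by simp
  show ?thesis unfolding rep_loc_match_def Ps pr
  proof (rule bexI[OF _ W], rule ballI)
    fix w assume w: "w \<in> W"
    let ?u = "uu w"
    have u: "?u \<in> U" "snd (pb ?u) = w" using uu w by auto
    note pf = pullback_facts[OF pbp[rule_format, OF u(1)]]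
    have wc: "w \<in> carr C" "ccod C w = cdom C f" using cov_members[OF W] w by auto
    have dw: "cdom C w \<in> cobj C" using dom_obj wc by blast
    have "rep_match H (ccomp C f w) (U, s) w (W, t)" unfolding rep_match_def fst_conv snd_conv
      by (intro bexI[OF _ u(1)] bexI[OF _ w] exI[of _ "fst (pb ?u)"] exI[of _ "cid C (cdom C w)"])
        (use pf u wc dw tw[OF w] res_id[OF H dw tsec[OF w]] in simp)
    then show "rep_match H (ccomp C f w) (U, s) (ccomp C (cid C (cdom C f)) w) (W, t)" using wc by simp
  qed
qed

lemma res_plus_class:
  assumes H: "is_presheaf C H" and f: "f \<in> carr C"
    and P: "P \<in> plus_reps C T H (ccod C f)" and Q: "Q \<in> plus_reps C T H (cdom C f)"
    and r: "rep_loc_match H (cdom C f) f P (cid C (cdom C f)) Q"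
  shows "res (plus C T H) f (plus_class C T H (ccod C f) P) = plus_class C T H (cdom C f) Q"
proof -
  let ?X = "ccod C f" and ?Y = "cdom C f"
  let ?c = "plus_class C T H ?X P"
  define P' where "P' = (SOME P'. P' \<in> ?c)"
  have "P \<in> ?c" by (rule plus_class_self[OF P])
  then have "P' \<in> ?c" unfolding P'_def by (rule someI)
  then have P': "P' \<in> plus_reps C T H ?X" and rPP': "plus_rel C T H ?X P P'"
    unfolding plus_class_def by auto
  have rs: "res (plus C T H) f ?c = plus_class C T H ?Y (pull_rep C H f P')"
    using P unfolding plus_def P'_def by auto
  define A where "A = pull_rep C H f P'"
  have A: "A \<in> plus_reps C T H ?Y" and rA: "rep_loc_match H ?Y f P' (cid C ?Y) A"
    using pull_rep_reps[OF H P' f] pull_rep_match[OF H P' f] unfolding A_def by auto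
  have X: "?X \<in> cobj C" and Y: "?Y \<in> cobj C" using cod_obj dom_obj f by auto
  have gP: "good_rep H P" and gP': "good_rep H P'" and gQ: "good_rep H Q" and gA: "good_rep H A"
    using plus_reps_good P P' Q A by blast+
  have "rep_loc_match H ?X (cid C ?X) P (cid C ?X) P'" using rPP' unfolding plus_rel_iff_loc_match .
  from rep_loc_match_restrict[OF H gP gP' this _ _ _ _ f refl]
  have r2: "rep_loc_match H ?Y f P f P'" using X f by simp
  have "rep_loc_match H ?Y (cid C ?Y) Q f P'"
    using rep_loc_match_trans[OF H gQ gP gP' _ _ _ _ _ _ rep_loc_match_sym[OF r] r2] f Y by simp
  then have "rep_loc_match H ?Y (cid C ?Y) Q (cid C ?Y) A"
    using rep_loc_match_trans[OF H gQ gP' gA _ _ _ _ _ _ _ rA] f Y by simp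
  then have "plus_class C T H ?Y Q = plus_class C T H ?Y A"
    using plus_class_eq_iff[OF H Q A] unfolding plus_rel_iff_loc_match by simp
  then show ?thesis using rs unfolding A_def by simp
qed

lemma res_plus_pull:
  assumes H: "is_presheaf C H" and f: "f \<in> carr C" and P: "P \<in> plus_reps C T H (ccod C f)"
  shows "res (plus C T H) f (plus_class C T H (ccod C f) P) = plus_class C T H (cdom C f) (pull_rep C H f P)"
  using res_plus_class[OF H f P pull_rep_reps[OF H P f] pull_rep_match[OF H P f]] .

lemma res_plus_comp:
  assumes H: "is_presheaf C H" and f: "f \<in> carr C" and g: "g \<in> carr C" and fg: "ccod C f = cdom C g"
    and c: "c \<in> sec (plus C T H) (ccod C g)"
  shows "res (plus C T H) (ccomp C g f) c = res (plus C T H) f (res (plus C T H) g c)"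
proof -
  obtain P where P: "P \<in> plus_reps C T H (ccod C g)" and cP: "c = plus_class C T H (ccod C g) P"
    using c unfolding sec_plus by blast
  define A where "A = pull_rep C H g P"
  have A: "A \<in> plus_reps C T H (ccod C f)" and rA: "rep_loc_match H (cdom C g) g P (cid C (cdom C g)) A"
    using pull_rep_reps[OF H P g] pull_rep_match[OF H P g] fg unfolding A_def by auto
  define B where "B = pull_rep C H f A"
  have B: "B \<in> plus_reps C T H (cdom C f)" and rB: "rep_loc_match H (cdom C f) f A (cid C (cdom C f)) B"
    using pull_rep_reps[OF H A f] pull_rep_match[OF H A f] unfolding B_def by auto
  have Yo: "cdom C g \<in> cobj C" "cdom C f \<in> cobj C" using dom_obj f g by auto
  have gs: "good_rep H P" "good_rep H A" "good_rep H B" using plus_reps_good P A B by blast+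
  have "rep_loc_match H (cdom C f) (ccomp C g f) P (ccomp C (cid C (cdom C g)) f) A"
    using rep_loc_match_restrict[OF H gs(1,2) rA _ _ _ _ f] g Yo fg by simp
  then have "rep_loc_match H (cdom C f) (ccomp C g f) P f A" using f fg by simp
  then have r: "rep_loc_match H (cdom C f) (ccomp C g f) P (cid C (cdom C f)) B"
    using rep_loc_match_trans[OF H gs _ _ _ _ _ _ _ rB] f g fg Yo by simp
  have gf: "ccomp C g f \<in> carr C" "ccod C (ccomp C g f) = ccod C g" "cdom C (ccomp C g f) = cdom C f"
    using f g fg by auto
  have "res (plus C T H) (ccomp C g f) c = plus_class C T H (cdom C f) B"
    using res_plus_class[OF H gf(1), of P B] gf P B r cP by simp
  also have "\<dots> = res (plus C T H) f (res (plus C T H) g c)"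
    using res_plus_pull[OF H g P] res_plus_pull[OF H f A] cP fg unfolding A_def B_def by simp
  finally show ?thesis .
qed

lemma plus_presheaf:
  assumes H: "is_presheaf C H"
  shows "is_presheaf C (plus C T H)"
  unfolding is_presheaf_def
proof (intro conjI ballI impI)
  fix f assume f: "f \<in> carr C"
  show "res (plus C T H) f ` sec (plus C T H) (ccod C f) \<subseteq> sec (plus C T H) (cdom C f)"
    using res_plus_pull[OF H f] pull_rep_reps[OF H _ f] unfolding sec_plus by auto
next
  fix X c assume X: "X \<in> cobj C" and c: "c \<in> sec (plus C T H) X"
  then obtain P where P: "P \<in> plus_reps C T H X" and cP: "c = plus_class C T H X P"
    unfolding sec_plus by blast
  have "rep_loc_match H X (cid C X) P (cid C X) P"
    using plus_rel_refl[OF P] unfolding plus_rel_iff_loc_match .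
  then show "res (plus C T H) (cid C X) c = c"
    using res_plus_class[OF H id_arr[OF X], of P P] X P cP by simp
next
  fix f g c assume "f \<in> carr C" "g \<in> carr C" "ccod C f = cdom C g" "c \<in> sec (plus C T H) (ccod C g)"
  then show "res (plus C T H) (ccomp C g f) c = res (plus C T H) f (res (plus C T H) g c)"
    by (rule res_plus_comp[OF H])
qed

definition unit_rep :: "'o \<Rightarrow> 'v \<Rightarrow> 'm set \<times> ('m \<Rightarrow> 'v)" where
  "unit_rep Y x = ({cid C Y}, restrict (\<lambda>_. x) {cid C Y})"

definition plus_unit :: "('o,'m,'v) presheaf \<Rightarrow> 'o \<Rightarrow> 'v \<Rightarrow> ('m set \<times> ('m \<Rightarrow> 'v)) set" where
  "plus_unit H Y x = plus_class C T H Y (unit_rep Y x)"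

lemma unit_rep_reps:
  assumes Y: "Y \<in> cobj C" and x: "x \<in> sec H Y"
  shows "unit_rep Y x \<in> plus_reps C T H Y"
  unfolding plus_reps_iff unit_rep_def fst_conv snd_conv compat_def
proof (intro conjI ballI allI impI)
  show "{cid C Y} \<in> T Y" using cov_id[OF Y] .
next
  show "restrict (\<lambda>_. x) {cid C Y} \<in> extensional {cid C Y}" by simp
next
  fix u assume "u \<in> {cid C Y}"
  then show "restrict (\<lambda>_. x) {cid C Y} u \<in> sec H (cdom C u)" using x Y by simp
next
  fix u1 u2 a b assume u: "u1 \<in> {cid C Y}" "u2 \<in> {cid C Y}"
    and ab: "a \<in> carr C \<and> b \<in> carr C \<and> cdom C a = cdom C b \<and> ccod C a = cdom C u1 \<and>
             ccod C b = cdom C u2 \<and> ccomp C u1 a = ccomp C u2 b"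
  then have a: "a \<in> carr C" "ccod C a = Y" and b: "b \<in> carr C" "ccod C b = Y"
    and "ccomp C (cid C Y) a = ccomp C (cid C Y) b"
    using Y by auto
  then have "a = b" by simp
  then show "res H a (restrict (\<lambda>_. x) {cid C Y} u1) = res H b (restrict (\<lambda>_. x) {cid C Y} u2)"
    using u by simp
qed

lemma plus_unit_sec: "Y \<in> cobj C \<Longrightarrow> x \<in> sec H Y \<Longrightarrow> plus_unit H Y x \<in> sec (plus C T H) Y"
  unfolding sec_plus plus_unit_def by (rule imageI[OF unit_rep_reps])

lemma res_plus_class_member:
  assumes H: "is_presheaf C H" and P: "P \<in> plus_reps C T H X" and v: "v \<in> fst P"
    and h: "h \<in> carr C" "ccod C h = cdom C v"
  shows "res (plus C T H) (ccomp C v h) (plus_class C T H X P) = plus_unit H (cdom C h) (res H h (snd P v))"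
proof -
  have vc: "v \<in> carr C" "ccod C v = X" using cov_members P v unfolding plus_reps_iff by blast+
  let ?Y = "cdom C h" and ?x = "res H h (snd P v)"
  have Y: "?Y \<in> cobj C" using dom_obj h by blast
  have x: "?x \<in> sec H ?Y"
    using res_sec[OF H h(1)] good_rep_sec[OF plus_reps_good[OF P] v] h by simp
  have vh: "ccomp C v h \<in> carr C" "ccod C (ccomp C v h) = X" "cdom C (ccomp C v h) = ?Y"
    using vc h by auto
  have "rep_match H (ccomp C v h) P (cid C ?Y) (unit_rep ?Y ?x)"
    unfolding rep_match_def unit_rep_def fst_conv snd_conv
    by (intro bexI[OF _ v] bexI[of _ "cid C ?Y"] exI[of _ h] exI[of _ "cid C ?Y"])
      (use h Y res_id[OF H Y x] in auto)
  then have "rep_loc_match H ?Y (ccomp C v h) P (cid C ?Y) (unit_rep ?Y ?x)"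
    unfolding rep_loc_match_def using cov_id[OF Y] vh Y by force
  then show ?thesis
    using res_plus_class[OF H vh(1), of P] vh P unit_rep_reps[OF Y x] unfolding plus_unit_def by simp
qed

lemma plus_unit_nat:
  assumes H: "is_presheaf C H" and Y: "Y \<in> cobj C" and x: "x \<in> sec H Y"
    and g: "g \<in> carr C" "ccod C g = Y"
  shows "res (plus C T H) g (plus_unit H Y x) = plus_unit H (cdom C g) (res H g x)"
  using res_plus_class_member[OF H unit_rep_reps[OF Y x], of "cid C Y" g] g Y
  unfolding plus_unit_def unit_rep_def by simp

lemma plus_locally_unit:
  assumes H: "is_presheaf C H" and c: "c \<in> sec (plus C T H) X"
  shows "\<exists>A\<in>T X. \<forall>a\<in>A. \<exists>x\<in>sec H (cdom C a). res (plus C T H) a c = plus_unit H (cdom C a) x"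
proof -
  obtain P where P: "P \<in> plus_reps C T H X" and cP: "c = plus_class C T H X P"
    using c unfolding sec_plus by blast
  have "res (plus C T H) a c = plus_unit H (cdom C a) (snd P a)" and "snd P a \<in> sec H (cdom C a)"
    if a: "a \<in> fst P" for a
  proof -
    have ac: "a \<in> carr C" using plus_reps_good[OF P] a unfolding good_rep_def by blast
    have Ya: "cdom C a \<in> cobj C" using dom_obj[OF ac] .
    show sa: "snd P a \<in> sec H (cdom C a)" by (rule good_rep_sec[OF plus_reps_good[OF P] a])
    show "res (plus C T H) a c = plus_unit H (cdom C a) (snd P a)"
      using res_plus_class_member[OF H P a, of "cid C (cdom C a)"] ac Ya res_id[OF H Ya sa] cP by simp
  qed
  then show ?thesis using P unfolding plus_reps_iff by blast
qed

lemma plus_unit_inj: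
  assumes H: "is_presheaf C H" and Y: "Y \<in> cobj C" and x: "x \<in> sec H Y" and y: "y \<in> sec H Y"
    and e: "plus_unit H Y x = plus_unit H Y y"
  shows "loc_eq H Y x y"
proof -
  have "plus_rel C T H Y (unit_rep Y x) (unit_rep Y y)"
    using e plus_class_eq_iff[OF H unit_rep_reps[OF Y x] unit_rep_reps[OF Y y]]
    unfolding plus_unit_def by simp
  then obtain W where W: "W \<in> T Y" and d: "\<And>w. w \<in> W \<Longrightarrow> rep_match H w (unit_rep Y x) w (unit_rep Y y)"
    unfolding plus_rel_iff_match by blast
  have "agree_on H W x y"
    unfolding agree_on_def
  proof
    fix w assume w: "w \<in> W"
    obtain a b where "a \<in> carr C" "b \<in> carr C" "ccod C a = Y" "ccod C b = Y"
      "ccomp C (cid C Y) a = w" "ccomp C (cid C Y) b = w" "res H a x = res H b y"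
      using d[OF w] Y unfolding rep_match_def unit_rep_def by auto
    then show "res H w x = res H w y" by simp
  qed
  then show ?thesis unfolding loc_eq_def using W by blast
qed

lemma res_plus_eq_match:
  assumes H: "is_presheaf C H" and P: "P \<in> plus_reps C T H (ccod C z)" and Q: "Q \<in> plus_reps C T H (ccod C z)"
    and z: "z \<in> carr C"
    and eq: "res (plus C T H) z (plus_class C T H (ccod C z) P) = res (plus C T H) z (plus_class C T H (ccod C z) Q)"
  shows "rep_loc_match H (cdom C z) z P z Q"
proof -
  let ?Y = "cdom C z"
  have Y: "?Y \<in> cobj C" using dom_obj z by blast
  define A where "A = pull_rep C H z P"
  define B where "B = pull_rep C H z Q"
  have A: "A \<in> plus_reps C T H ?Y" and rA: "rep_loc_match H ?Y z P (cid C ?Y) A"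
    using pull_rep_reps[OF H P z] pull_rep_match[OF H P z] unfolding A_def by auto
  have B: "B \<in> plus_reps C T H ?Y" and rB: "rep_loc_match H ?Y z Q (cid C ?Y) B"
    using pull_rep_reps[OF H Q z] pull_rep_match[OF H Q z] unfolding B_def by auto
  have "plus_class C T H ?Y A = plus_class C T H ?Y B"
    using eq res_plus_pull[OF H z P] res_plus_pull[OF H z Q] unfolding A_def B_def by simp
  then have rAB: "rep_loc_match H ?Y (cid C ?Y) A (cid C ?Y) B"
    using plus_class_eq_iff[OF H A B] unfolding plus_rel_iff_loc_match by simp
  have gs: "good_rep H P" "good_rep H Q" "good_rep H A" "good_rep H B"
    using plus_reps_good P Q A B by blast+
  have "rep_loc_match H ?Y z P (cid C ?Y) B"
    using rep_loc_match_trans[OF H gs(1,3,4) _ _ _ _ _ _ rA rAB] z Y by simp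
  then show ?thesis
    using rep_loc_match_trans[OF H gs(1,4,2) _ _ _ _ _ _ _ rep_loc_match_sym[OF rB]] z Y by simp
qed

lemma plus_separated:
  assumes H: "is_presheaf C H"
  shows "separated C T (plus C T H)"
proof (rule separatedI)
  fix X Z c1 c2 assume Z: "Z \<in> T X" and c1: "c1 \<in> sec (plus C T H) X" and c2: "c2 \<in> sec (plus C T H) X"
    and agr: "agree_on (plus C T H) Z c1 c2"
  obtain P where P: "P \<in> plus_reps C T H X" and cP: "c1 = plus_class C T H X P"
    using c1 unfolding sec_plus by blast
  obtain Q where Q: "Q \<in> plus_reps C T H X" and cQ: "c2 = plus_class C T H X Q"
    using c2 unfolding sec_plus by blast
  have X: "X \<in> cobj C" using plus_reps_obj[OF P] .
  have "rep_loc_match H X (cid C X) P (cid C X) Q"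
  proof (rule rep_loc_match_local[OF Z])
    fix z assume z: "z \<in> Z"
    have zc: "z \<in> carr C" "ccod C z = X" using cov_members[OF Z] z by auto
    have "rep_loc_match H (cdom C z) z P z Q"
      using res_plus_eq_match[OF H _ _ zc(1)] P Q zc agr z cP cQ unfolding agree_on_def by simp
    then show "rep_loc_match H (cdom C z) (ccomp C (cid C X) z) P (ccomp C (cid C X) z) Q"
      using zc by simp
  qed (use X in auto)
  then show "c1 = c2" using plus_class_eq_iff[OF H P Q] cP cQ unfolding plus_rel_iff_loc_match by simp
qed

end

locale two_sites = s: site C \<sigma> + r: site C \<rho> for C :: "('o,'m) cat" and \<sigma> \<rho> +
  fixes F :: "('o,'m,'v) presheaf"
  assumes F: "is_presheaf C F"
    and refinement: "\<forall>X U V. U \<in> \<rho> X \<and> (\<forall>u\<in>U. V u \<in> \<sigma> (cdom C u)) \<longrightarrow>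
           (\<exists>U' V'. U' \<in> \<sigma> X \<and> (\<forall>k\<in>U'. V' k \<in> \<rho> (cdom C k)) \<and>
                    refines C (comp_fam C U' V') (comp_fam C U V))"
    and F_sep: "separated C \<rho> F"
begin

abbreviation Fplus :: "('o,'m,('m set \<times> ('m \<Rightarrow> 'v)) set) presheaf" where
  "Fplus \<equiv> plus C \<sigma> F"

abbreviation Fsh :: "('o,'m,('m set \<times> ('m \<Rightarrow> ('m set \<times> ('m \<Rightarrow> 'v)) set)) set) presheaf" where
  "Fsh \<equiv> plus C \<sigma> Fplus"

lemma Fplus_presheaf: "is_presheaf C Fplus"
  by (rule s.plus_presheaf[OF F])

lemma Fsh_presheaf: "is_presheaf C Fsh"
  by (rule s.plus_presheaf[OF Fplus_presheaf])

definition unit2 :: "'o \<Rightarrow> 'v \<Rightarrow> ('m set \<times> ('m \<Rightarrow> ('m set \<times> ('m \<Rightarrow> 'v)) set)) set" where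
  "unit2 Y x = s.plus_unit Fplus Y (s.plus_unit F Y x)"

lemma unit2_nat:
  assumes Y: "Y \<in> cobj C" and x: "x \<in> sec F Y" and g: "g \<in> carr C" "ccod C g = Y"
  shows "res Fsh g (unit2 Y x) = unit2 (cdom C g) (res F g x)"
proof -
  have "res Fsh g (unit2 Y x) = s.plus_unit Fplus (cdom C g) (res Fplus g (s.plus_unit F Y x))"
    unfolding unit2_def by (rule s.plus_unit_nat[OF Fplus_presheaf Y s.plus_unit_sec[OF Y x] g])
  also have "res Fplus g (s.plus_unit F Y x) = s.plus_unit F (cdom C g) (res F g x)"
    by (rule s.plus_unit_nat[OF F Y x g])
  finally show ?thesis unfolding unit2_def .
qed

lemma unit2_inj:
  assumes Y: "Y \<in> cobj C" and x: "x \<in> sec F Y" and y: "y \<in> sec F Y"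
    and e: "unit2 Y x = unit2 Y y"
  shows "s.loc_eq F Y x y"
proof -
  obtain W where W: "W \<in> \<sigma> Y" and agr: "agree_on Fplus W (s.plus_unit F Y x) (s.plus_unit F Y y)"
    using s.plus_unit_inj[OF Fplus_presheaf Y s.plus_unit_sec[OF Y x] s.plus_unit_sec[OF Y y]] e
    unfolding unit2_def s.loc_eq_def by blast
  show ?thesis
  proof (rule s.loc_eq_local[OF F W x y])
    fix w assume w: "w \<in> W"
    have wc: "w \<in> carr C" "ccod C w = Y" using s.cov_members[OF W] w by auto
    have "s.plus_unit F (cdom C w) (res F w x) = s.plus_unit F (cdom C w) (res F w y)"
      using agr w s.plus_unit_nat[OF F Y x wc] s.plus_unit_nat[OF F Y y wc]
      unfolding agree_on_def by simp
    then show "s.loc_eq F (cdom C w) (res F w x) (res F w y)"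
      using s.plus_unit_inj[OF F s.dom_obj[OF wc(1)]] res_sec[OF F wc(1)] x y wc by simp
  qed
qed

lemma unit2_loc_eq:
  assumes Y: "Y \<in> cobj C" and x: "x \<in> sec F Y" and y: "y \<in> sec F Y"
    and le: "s.loc_eq F Y x y"
  shows "s.loc_eq Fsh Y (unit2 Y x) (unit2 Y y)"
proof -
  obtain W where W: "W \<in> \<sigma> Y" and agr: "agree_on F W x y"
    using le unfolding s.loc_eq_def by blast
  have "agree_on Fsh W (unit2 Y x) (unit2 Y y)"
    using agr s.cov_members[OF W] unit2_nat[OF Y x] unit2_nat[OF Y y] unfolding agree_on_def by auto
  then show ?thesis unfolding s.loc_eq_def using W by blast
qed

definition unit2_on :: "'m set \<Rightarrow> ('m set \<times> ('m \<Rightarrow> ('m set \<times> ('m \<Rightarrow> 'v)) set)) set \<Rightarrow> bool" where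
  "unit2_on A c \<longleftrightarrow> (\<forall>a\<in>A. \<exists>x\<in>sec F (cdom C a). res Fsh a c = unit2 (cdom C a) x)"

text \<open>Every section of Fsh comes \<sigma>-locally from F: compose the coverings on which it comes from
  Fplus with the coverings on which those sections come from F.\<close>
lemma Fsh_locally_unit2:
  assumes c: "c \<in> sec Fsh X"
  shows "\<exists>A\<in>\<sigma> X. unit2_on A c"
proof -
  obtain A where A: "A \<in> \<sigma> X"
    and "\<forall>a\<in>A. \<exists>d\<in>sec Fplus (cdom C a). res Fsh a c = s.plus_unit Fplus (cdom C a) d"
    using s.plus_locally_unit[OF Fplus_presheaf c] by blast
  then obtain d where dsec: "\<And>a. a \<in> A \<Longrightarrow> d a \<in> sec Fplus (cdom C a)"
    and cd: "\<And>a. a \<in> A \<Longrightarrow> res Fsh a c = s.plus_unit Fplus (cdom C a) (d a)"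
    by metis
  have "\<forall>a\<in>A. \<exists>B\<in>\<sigma> (cdom C a). \<forall>b\<in>B. \<exists>x\<in>sec F (cdom C b).
          res Fplus b (d a) = s.plus_unit F (cdom C b) x"
    using s.plus_locally_unit[OF F dsec] by blast
  then obtain B where B: "\<And>a. a \<in> A \<Longrightarrow> B a \<in> \<sigma> (cdom C a)"
    and dx: "\<And>a b. a \<in> A \<Longrightarrow> b \<in> B a \<Longrightarrow>
               \<exists>x\<in>sec F (cdom C b). res Fplus b (d a) = s.plus_unit F (cdom C b) x"
    by metis
  have "unit2_on (comp_fam C A B) c"
    unfolding unit2_on_def comp_fam_def
  proof
    fix e assume "e \<in> (\<Union>a\<in>A. ccomp C a ` B a)"
    then obtain a b where a: "a \<in> A" and b: "b \<in> B a" and e: "e = ccomp C a b" by blast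
    have ac: "a \<in> carr C" "ccod C a = X" using s.cov_members[OF A] a by auto
    have bc: "b \<in> carr C" "ccod C b = cdom C a" using s.cov_members[OF B[OF a]] b by auto
    obtain x where x: "x \<in> sec F (cdom C b)" and bx: "res Fplus b (d a) = s.plus_unit F (cdom C b) x"
      using dx[OF a b] by blast
    have "res Fsh e c = res Fsh b (res Fsh a c)"
      using res_comp[OF Fsh_presheaf bc(1) ac(1) bc(2)] c ac e by simp
    also have "\<dots> = s.plus_unit Fplus (cdom C b) (res Fplus b (d a))"
      using cd[OF a] s.plus_unit_nat[OF Fplus_presheaf s.dom_obj[OF ac(1)] dsec[OF a] bc] by simp
    also have "\<dots> = unit2 (cdom C b) x" using bx unfolding unit2_def by simp
    finally show "\<exists>x\<in>sec F (cdom C e). res Fsh e c = unit2 (cdom C e) x" using x e ac bc by auto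
  qed
  then show ?thesis using s.cov_comp[OF A B] by blast
qed

text \<open>Coming locally from F passes to refinements, by naturality of unit2.\<close>
lemma unit2_on_refines:
  assumes c: "c \<in> sec Fsh X" and A: "\<forall>a\<in>A. a \<in> carr C \<and> ccod C a = X"
    and on: "unit2_on A c" and W: "refines C W A"
  shows "unit2_on W c"
  unfolding unit2_on_def
proof
  fix w assume "w \<in> W"
  then obtain a h where a: "a \<in> A" and h: "h \<in> carr C" "ccod C h = cdom C a"
    and w: "w = ccomp C a h"
    using W unfolding refines_def by blast
  obtain x where x: "x \<in> sec F (cdom C a)" and ax: "res Fsh a c = unit2 (cdom C a) x"
    using on a unfolding unit2_on_def by blast
  have "res Fsh w c = res Fsh h (unit2 (cdom C a) x)"
    using res_comp[OF Fsh_presheaf h(1) _ h(2)] A a c w ax by auto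
  also have "\<dots> = unit2 (cdom C h) (res F h x)"
    using unit2_nat[OF _ x h] s.dom_obj A a by blast
  finally show "\<exists>x\<in>sec F (cdom C w). res Fsh w c = unit2 (cdom C w) x"
    using res_sec[OF F h(1)] x h w A a by auto
qed

lemma rho_loc_eq_unit2_members:
  assumes x: "x \<in> sec F Y" and y: "y \<in> sec F Y"
    and le: "r.loc_eq Fsh Y (unit2 Y x) (unit2 Y y)"
  shows "\<exists>U\<in>\<rho> Y. \<forall>u\<in>U. s.loc_eq F (cdom C u) (res F u x) (res F u y)"
proof -
  obtain U where U: "U \<in> \<rho> Y" and agr: "agree_on Fsh U (unit2 Y x) (unit2 Y y)"
    using le unfolding r.loc_eq_def by blast
  have Y: "Y \<in> cobj C" using r.cov_obj[OF U] .
  have "s.loc_eq F (cdom C u) (res F u x) (res F u y)" if u: "u \<in> U" for u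
  proof -
    have uc: "u \<in> carr C" "ccod C u = Y" using r.cov_members[OF U] u by auto
    have "unit2 (cdom C u) (res F u x) = unit2 (cdom C u) (res F u y)"
      using agr u unit2_nat[OF Y x uc] unit2_nat[OF Y y uc] unfolding agree_on_def by simp
    then show ?thesis using unit2_inj[OF s.dom_obj[OF uc(1)]] res_sec[OF F uc(1)] x y uc by simp
  qed
  then show ?thesis using U by blast
qed

text \<open>By the previous lemma x and y agree on a \<rho>-covering U followed
  by \<sigma>-coverings V u.  By hypothesis this is refined by a \<sigma>-covering U' followed by
  \<rho>-coverings V' k; so over each k the restrictions of x and y agree on the \<rho>-covering V' k,
  hence coincide since F is \<rho>-separated.\<close>
lemma loc_eq_of_rho_agreement:
  assumes x: "x \<in> sec F Y" and y: "y \<in> sec F Y"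
    and le: "r.loc_eq Fsh Y (unit2 Y x) (unit2 Y y)"
  shows "s.loc_eq F Y x y"
proof -
  obtain U where U: "U \<in> \<rho> Y" and "\<forall>u\<in>U. s.loc_eq F (cdom C u) (res F u x) (res F u y)"
    using rho_loc_eq_unit2_members[OF x y le] by blast
  then obtain V where V: "\<And>u. u \<in> U \<Longrightarrow> V u \<in> \<sigma> (cdom C u)"
    and agrV: "\<And>u. u \<in> U \<Longrightarrow> agree_on F (V u) (res F u x) (res F u y)"
    unfolding s.loc_eq_def by metis
  have UV: "\<forall>w\<in>comp_fam C U V. w \<in> carr C \<and> ccod C w = Y"
    using s.comp_fam_members[OF r.cov_members[OF U]] s.cov_members[OF V] by blast
  have agrUV: "agree_on F (comp_fam C U V) x y"
    using s.agree_on_comp_fam[OF F x y r.cov_members[OF U]] s.cov_members[OF V] agrV by blast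
  obtain U' V' where U': "U' \<in> \<sigma> Y" and V': "\<And>k. k \<in> U' \<Longrightarrow> V' k \<in> \<rho> (cdom C k)"
    and ref: "refines C (comp_fam C U' V') (comp_fam C U V)"
    using refinement U V by blast
  have "agree_on F (comp_fam C U' V') x y"
    by (rule s.agree_on_refines[OF F x y UV ref agrUV])
  then have agrV': "\<forall>k\<in>U'. agree_on F (V' k) (res F k x) (res F k y)"
    using s.agree_on_comp_fam[OF F x y s.cov_members[OF U']] r.cov_members[OF V'] by blast
  have "agree_on F U' x y"
    unfolding agree_on_def
  proof
    fix k assume k: "k \<in> U'"
    have kc: "k \<in> carr C" "ccod C k = Y" using s.cov_members[OF U'] k by auto
    show "res F k x = res F k y"
      using separated_agree_on[OF F_sep V'[OF k]] res_sec[OF F kc(1)] x y kc agrV' k by auto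
  qed
  then show ?thesis unfolding s.loc_eq_def using U' by blast
qed

text \<open>Two sections agreeing on a
  \<rho>-covering both come from F on a common \<sigma>-covering W; over each member of W the corresponding
  sections of F are \<sigma>-locally equal by the previous lemma, so the two sections are \<sigma>-locally equal,
  hence equal because Fsh (a plus construction) is \<sigma>-separated.\<close>
lemma Fsh_rho_separated: "separated C \<rho> Fsh"
proof (rule separatedI)
  fix X U c1 c2 assume U: "U \<in> \<rho> X" and c1: "c1 \<in> sec Fsh X" and c2: "c2 \<in> sec Fsh X"
    and agr: "agree_on Fsh U c1 c2"
  obtain A1 where A1: "A1 \<in> \<sigma> X" "unit2_on A1 c1" using Fsh_locally_unit2[OF c1] by blast
  obtain A2 where A2: "A2 \<in> \<sigma> X" "unit2_on A2 c2" using Fsh_locally_unit2[OF c2] by blast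
  obtain W where W: "W \<in> \<sigma> X" and ref: "refines C W A1" "refines C W A2"
    using s.common_refinement[OF A1(1) A2(1)] by blast
  have on1: "unit2_on W c1" and on2: "unit2_on W c2"
    using unit2_on_refines[OF c1 s.cov_members[OF A1(1)] A1(2) ref(1)]
      unit2_on_refines[OF c2 s.cov_members[OF A2(1)] A2(2) ref(2)] by blast+
  have rho_le: "r.loc_eq Fsh X c1 c2" using U agr unfolding r.loc_eq_def by blast
  have "s.loc_eq Fsh X c1 c2"
  proof (rule s.loc_eq_local[OF Fsh_presheaf W c1 c2])
    fix w assume w: "w \<in> W"
    have wc: "w \<in> carr C" "ccod C w = X" using s.cov_members[OF W] w by auto
    obtain x y where x: "x \<in> sec F (cdom C w)" and y: "y \<in> sec F (cdom C w)"
      and cx: "res Fsh w c1 = unit2 (cdom C w) x" and cy: "res Fsh w c2 = unit2 (cdom C w) y"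
      using on1 on2 w unfolding unit2_on_def by blast
    have "r.loc_eq Fsh (cdom C w) (unit2 (cdom C w) x) (unit2 (cdom C w) y)"
      using r.loc_eq_restrict[OF Fsh_presheaf c1 c2 wc rho_le] cx cy by simp
    then have "s.loc_eq F (cdom C w) x y" by (rule loc_eq_of_rho_agreement[OF x y])
    then show "s.loc_eq Fsh (cdom C w) (res Fsh w c1) (res Fsh w c2)"
      using unit2_loc_eq[OF s.dom_obj[OF wc(1)] x y] cx cy by simp
  qed
  then obtain Z where "Z \<in> \<sigma> X" "agree_on Fsh Z c1 c2" unfolding s.loc_eq_def by blast
  then show "c1 = c2"
    using separated_agree_on[OF s.plus_separated[OF Fplus_presheaf]] c1 c2 by blast
qed

end

theorem mainTheorem4:
  fixes C :: "('o,'m) cat" and \<sigma> \<rho> :: "'o \<Rightarrow> 'm set set"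
    and F :: "('o,'m,'v) presheaf" and G :: "'o \<Rightarrow> 'v monoid"
  assumes "category C" and "gtop C \<sigma>" and "gtop C \<rho>"
    and "\<forall>X U V. U \<in> \<rho> X \<and> (\<forall>u\<in>U. V u \<in> \<sigma> (cdom C u)) \<longrightarrow>
           (\<exists>U' V'. U' \<in> \<sigma> X \<and> (\<forall>k\<in>U'. V' k \<in> \<rho> (cdom C k)) \<and>
                    refines C (comp_fam C U' V') (comp_fam C U V))"
    and "is_ab_presheaf C F G"
    and "separated C \<rho> F"
  shows "separated C \<rho> (sheafify C \<sigma> F)"
proof -
  have "is_presheaf C F" using assms(5) unfolding is_ab_presheaf_def by blast
  then interpret two_sites C \<sigma> \<rho> F
    using assms(1-4,6) by unfold_locales
  show ?thesis unfolding sheafify_def by (rule Fsh_rho_separated)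
qed

end
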